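(* Let $L$ be a finite lattice, $\varphi\in R(L)$ with Möbius inverse $f$, and let $V$ be an order ideal of $L$. Then the support $\{x\in L: f(x)\neq0\}$ of $f$ is contained in $V$ if and only if $\nabla_V^b\varphi=0$ for every $b\in L\setminus V$.
   Context: $L$ is a finite lattice with order $\le$, meet $\wedge$, maximum $\hat1$; $R(L)$ is the space of real-valued functions on $L$. The Möbius inverse of $\varphi$ is the unique $f\in R(L)$ with $\varphi(x)=\sum_{y\le x}f(y)$ for all $x$. An order ideal (down-set) is a subset $V$ with $x\le y\in V\Rightarrow x\in V$. For a finite $A\subseteq L$ and $b\in L$, $\nabla_A^b\varphi=\sum_{A'\subseteq A}(-1)^{|A'|}\varphi(\bigwedge A'\wedge b)$ where $\bigwedge A'$ is the meet of $A'$ and $\bigwedge\emptyset=\hat1$; for nonempty $A=\{a_1,\dots,a_n\}$ this equals $\nabla_{a_1,\ldots,a_n}\varphi(b)$, where $\nabla_a\varphi(x)=\varphi(x)-\varphi(x\wedge a)$ and successive differences are iterated. *)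

theory Defs
  imports Complex_Main
begin

(* A finite lattice is modelled as a type of class {finite, complete_lattice}
   (every finite nonempty lattice is complete); Inf {} = top is the maximum. *)

definition order_ideal :: "'a::order set \<Rightarrow> bool" where
  "order_ideal V \<longleftrightarrow> (\<forall>x y. x \<le> y \<longrightarrow> y \<in> V \<longrightarrow> x \<in> V)"

definition is_moebius_inverse :: "('a::order \<Rightarrow> real) \<Rightarrow> ('a \<Rightarrow> real) \<Rightarrow> bool" where
  "is_moebius_inverse \<phi> f \<longleftrightarrow> (\<forall>x. \<phi> x = (\<Sum>y\<in>{y. y \<le> x}. f y))"

definition nabla :: "'a::complete_lattice set \<Rightarrow> 'a \<Rightarrow> ('a \<Rightarrow> real) \<Rightarrow> real" where
  "nabla A b \<phi> = (\<Sum>A'\<in>Pow A. (-1) ^ card A' * \<phi> (inf (Inf A') b))"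

end

theory Submission
  imports Defs
begin

text \<open>Expanding \<open>\<phi>\<close> through its Moebius inverse and exchanging the sums turns
  \<open>nabla V b \<phi>\<close> into \<open>\<Sum>y \<le> b. c\<^sub>y f y\<close>, where \<open>c\<^sub>y\<close> is the alternating sum over all
  \<open>A' \<subseteq> V\<close> with \<open>y \<le> \<Sqinter>A'\<close>, i.e. over all subsets of \<open>{a \<in> V. y \<le> a}\<close>. Since \<open>V\<close> is an
  order ideal this set is empty exactly when \<open>y \<notin> V\<close>, so \<open>nabla V b \<phi>\<close> is the sum of
  \<open>f\<close> over \<open>{y \<le> b. y \<notin> V}\<close>. These sums vanish for all \<open>b \<notin> V\<close> iff \<open>f\<close> vanishes
  outside \<open>V\<close>, the backward direction by induction along the finite order.\<close>

lemma sum_neg_one_power_card_Pow: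
  assumes "finite W"
  shows "(\<Sum>X\<in>Pow W. (-1::real) ^ card X) = (if W = {} then 1 else 0)"
proof -
  have "(\<Prod>x\<in>W. (1::real) - 1) = (\<Sum>X\<in>Pow W. (-1) ^ card X * (\<Prod>x\<in>X. 1) * (\<Prod>x\<in>W-X. 1))"
    by (rule prod_diff_conv_sum[OF assms])
  moreover have "W \<noteq> {} \<Longrightarrow> card W > 0"
    using assms by (simp add: card_gt_0_iff)
  ultimately show ?thesis
    by (cases "W = {}") (auto simp: zero_power)
qed

lemma sum_Pow_le_Inf_neg_one_power_card:
  fixes V :: "'a::complete_lattice set"
  assumes "finite V" and "order_ideal V"
  shows "(\<Sum>A'\<in>Pow V. if y \<le> Inf A' then (-1::real) ^ card A' else 0) = (if y \<in> V then 0 else 1)"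
proof -
  let ?W = "{a\<in>V. y \<le> a}"
  have "(\<Sum>A'\<in>Pow V. if y \<le> Inf A' then (-1::real) ^ card A' else 0)
      = (\<Sum>A'\<in>{A'\<in>Pow V. A' \<subseteq> ?W}. (-1) ^ card A')"
    using assms(1) by (subst sum.inter_filter[symmetric]) (auto simp: le_Inf_iff intro!: sum.cong)
  also have "{A'\<in>Pow V. A' \<subseteq> ?W} = Pow ?W"
    by auto
  also have "(\<Sum>A'\<in>Pow ?W. (-1::real) ^ card A') = (if ?W = {} then 1 else 0)"
    using assms(1) by (simp add: sum_neg_one_power_card_Pow)
  also have "(?W = {}) = (y \<notin> V)"
    using assms(2) unfolding order_ideal_def by auto
  finally show ?thesis
    by simp
qed

lemma nabla_eq_sum_moebius_outside:
  fixes \<phi> f :: "'a::{finite, complete_lattice} \<Rightarrow> real" and V :: "'a set"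
  assumes "is_moebius_inverse \<phi> f" and "order_ideal V"
  shows "nabla V b \<phi> = (\<Sum>y | y \<le> b \<and> y \<notin> V. f y)"
proof -
  have "nabla V b \<phi> = (\<Sum>A'\<in>Pow V. \<Sum>y\<in>UNIV. if y \<le> inf (Inf A') b then (-1) ^ card A' * f y else 0)"
    using assms(1) unfolding nabla_def is_moebius_inverse_def
    by (simp add: sum_distrib_left sum.If_cases Int_def)
  also have "\<dots> = (\<Sum>y\<in>UNIV. \<Sum>A'\<in>Pow V. if y \<le> inf (Inf A') b then (-1) ^ card A' * f y else 0)"
    by (rule sum.swap)
  also have "\<dots> = (\<Sum>y\<in>UNIV. if y \<le> b then
                     f y * (\<Sum>A'\<in>Pow V. if y \<le> Inf A' then (-1) ^ card A' else 0) else 0)"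
    by (intro sum.cong refl) (auto simp: sum_distrib_left intro!: sum.cong)
  also have "\<dots> = (\<Sum>y\<in>UNIV. if y \<le> b \<and> y \<notin> V then f y else 0)"
    using sum_Pow_le_Inf_neg_one_power_card[OF finite assms(2)] by (intro sum.cong) auto
  also have "\<dots> = (\<Sum>y | y \<le> b \<and> y \<notin> V. f y)"
    by (simp add: sum.If_cases Int_def)
  finally show ?thesis .
qed

lemma zero_if_down_sums_vanish:
  fixes f :: "'a::{finite, order} \<Rightarrow> real"
  assumes "\<And>b. b \<in> S \<Longrightarrow> (\<Sum>y | y \<le> b \<and> y \<in> S. f y) = 0"
    and "x \<in> S"
  shows "f x = 0"
proof -
  have "wfp ((<) :: 'a \<Rightarrow> 'a \<Rightarrow> bool)"
    by (rule strict_partial_order_wfp_on_finite_set) (auto intro: transp_onI asymp_onI)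
  then show ?thesis
    using assms(2)
  proof (induction x rule: wfp_induct_rule)
    case (less x)
    have "{y. y \<le> x \<and> y \<in> S} = insert x {y. y < x \<and> y \<in> S}"
      using less.prems by (auto simp: order.order_iff_strict)
    then have "0 = f x + (\<Sum>y | y < x \<and> y \<in> S. f y)"
      using assms(1)[OF less.prems] by simp
    also have "(\<Sum>y | y < x \<and> y \<in> S. f y) = 0"
      using less.IH by (auto intro!: sum.neutral)
    finally show ?case
      by simp
  qed
qed

theorem proposition2p6:
  fixes \<phi> f :: "'a::{finite, complete_lattice} \<Rightarrow> real" and V :: "'a set"
  assumes "is_moebius_inverse \<phi> f"
    and "order_ideal V"
  shows "{x. f x \<noteq> 0} \<subseteq> V \<longleftrightarrow> (\<forall>b. b \<notin> V \<longrightarrow> nabla V b \<phi> = 0)"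
proof
  assume "{x. f x \<noteq> 0} \<subseteq> V"
  then show "\<forall>b. b \<notin> V \<longrightarrow> nabla V b \<phi> = 0"
    by (auto simp: nabla_eq_sum_moebius_outside[OF assms] intro!: sum.neutral)
next
  assume "\<forall>b. b \<notin> V \<longrightarrow> nabla V b \<phi> = 0"
  then have "(\<Sum>y | y \<le> b \<and> y \<in> - V. f y) = 0" if "b \<in> - V" for b
    using that by (simp add: nabla_eq_sum_moebius_outside[OF assms])
  then have "f x = 0" if "x \<notin> V" for x
    using zero_if_down_sums_vanish that by blast
  then show "{x. f x \<noteq> 0} \<subseteq> V"
    by blast
qed

end
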